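(* Let $K\ge2$, $p\in(0,1)$, and let $\sigma:[K]\to[K]$ be a bijection different from the identity. Then there exists $m\in[K-1]$ such that $d_S(\sigma)\ge d_S(\hat\sigma_m)$ for all $S\in\mathcal S$.
   Context: Items are $[K]=\{1,\dots,K\}$, $\mathcal S=\{S\subseteq[K]:|S|\ge2\}$. A ranking is a bijection $\sigma:[K]\to[K]$, $\sigma(i)=k$ meaning item $i$ is in position $k$. For $S\in\mathcal S$, $i\in S$, let $\sigma(i\mid S)=1+|\{j\in S:\sigma(j)<\sigma(i)\}|$ and $f^{\mathrm{OA}}_\sigma(i\mid S)=\frac{1-p}{1-p^{|S|}}p^{\sigma(i\mid S)-1}$. Define $d_S(\sigma)=\sum_{i\in S}f^{\mathrm{OA}}_{\mathrm{id}}(i\mid S)\log\frac{f^{\mathrm{OA}}_{\mathrm{id}}(i\mid S)}{f^{\mathrm{OA}}_\sigma(i\mid S)}$, with $\mathrm{id}$ the identity ranking. For $m\in[K-1]$, $\hat\sigma_m$ is the ranking obtained from the identity by swapping the positions of items $m$ and $m+1$: $\hat\sigma_m(m)=m+1$, $\hat\sigma_m(m+1)=m$, $\hat\sigma_m(j)=j$ otherwise. *)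

theory Defs
  imports Complex_Main
begin

text \<open>Items are {1..K}; a ranking is a bijection sigma of {1..K} onto itself,
  sigma i = k meaning item i is in position k.\<close>

definition is_ranking :: "nat \<Rightarrow> (nat \<Rightarrow> nat) \<Rightarrow> bool" where
  "is_ranking K \<sigma> \<longleftrightarrow> bij_betw \<sigma> {1..K} {1..K}"

definition admissible_sets :: "nat \<Rightarrow> nat set set" where
  "admissible_sets K = {S. S \<subseteq> {1..K} \<and> card S \<ge> 2}"

definition rel_pos :: "(nat \<Rightarrow> nat) \<Rightarrow> nat \<Rightarrow> nat set \<Rightarrow> nat" where
  "rel_pos \<sigma> i S = 1 + card {j \<in> S. \<sigma> j < \<sigma> i}"

definition f_OA :: "real \<Rightarrow> (nat \<Rightarrow> nat) \<Rightarrow> nat \<Rightarrow> nat set \<Rightarrow> real" where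
  "f_OA p \<sigma> i S = (1 - p) / (1 - p ^ card S) * p ^ (rel_pos \<sigma> i S - 1)"

definition d_S :: "real \<Rightarrow> nat set \<Rightarrow> (nat \<Rightarrow> nat) \<Rightarrow> real" where
  "d_S p S \<sigma> = (\<Sum>i\<in>S. f_OA p id i S * ln (f_OA p id i S / f_OA p \<sigma> i S))"

definition adj_swap :: "nat \<Rightarrow> nat \<Rightarrow> nat" where
  "adj_swap m = (\<lambda>j. if j = m then m + 1 else if j = m + 1 then m else j)"

end

theory Submission
  imports Defs
begin

text \<open>With \<open>c = (1 - p) / (1 - p ^ |S|)\<close>, the divergence \<open>d_S(\<tau>)\<close> equals \<open>c \<cdot> ln (1/p)\<close> times a
  weighted count of the pairs \<open>i < j\<close> in \<open>S\<close> that \<open>\<tau>\<close> inverts, the pair weighing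
  \<open>p ^ rank i - p ^ rank j \<ge> 0\<close> (ranks taken in \<open>S\<close>). Hence \<open>d_S\<close> is monotone under inclusion of
  inversion sets. The adjacent swap \<open>adj_swap m\<close> inverts only the pair \<open>(m, m + 1)\<close>, and any
  non-identity ranking has a descent \<open>\<sigma> (m + 1) < \<sigma> m\<close>; for that \<open>m\<close> the inversions of
  \<open>adj_swap m\<close> are among those of \<open>\<sigma>\<close>, for every \<open>S\<close> at once.\<close>

definition rank_weight :: "real \<Rightarrow> nat set \<Rightarrow> nat \<Rightarrow> real" where
  "rank_weight p S i = p ^ card {j\<in>S. j < i}"

definition weighted_inversions :: "real \<Rightarrow> nat set \<Rightarrow> (nat \<Rightarrow> nat) \<Rightarrow> real" where
  "weighted_inversions p S \<tau> =
     (\<Sum>i\<in>S. \<Sum>j\<in>S. if i < j \<and> \<tau> j < \<tau> i then rank_weight p S i - rank_weight p S j else 0)"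

lemma of_nat_card_filter_eq_sum:
  assumes "finite S"
  shows "real (card {j\<in>S. P j}) = (\<Sum>j\<in>S. if P j then 1 else 0)"
  using assms by (simp add: sum.inter_filter[symmetric])

lemma sum_square_eq_sum_lt_pairs:
  fixes h :: "'a::linorder \<Rightarrow> 'a \<Rightarrow> 'b::comm_monoid_add"
  assumes "\<And>i. h i i = 0"
  shows "(\<Sum>i\<in>S. \<Sum>j\<in>S. h i j) = (\<Sum>i\<in>S. \<Sum>j\<in>S. if i < j then h i j + h j i else 0)"
proof -
  have split: "h i j = (if i < j then h i j else 0) + (if j < i then h i j else 0)" for i j
    using assms[of i] by (cases i j rule: linorder_cases) auto
  have "(\<Sum>i\<in>S. \<Sum>j\<in>S. h i j) = (\<Sum>i\<in>S. \<Sum>j\<in>S. if i < j then h i j else 0)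
        + (\<Sum>i\<in>S. \<Sum>j\<in>S. if j < i then h i j else 0)"
    by (subst split) (simp add: sum.distrib)
  also have "(\<Sum>i\<in>S. \<Sum>j\<in>S. if j < i then h i j else 0) = (\<Sum>j\<in>S. \<Sum>i\<in>S. if j < i then h i j else 0)"
    by (rule sum.swap)
  also have "(\<Sum>i\<in>S. \<Sum>j\<in>S. if i < j then h i j else 0) + \<dots>
     = (\<Sum>i\<in>S. \<Sum>j\<in>S. if i < j then h i j + h j i else 0)"
    by (simp add: sum.distrib[symmetric]) (intro sum.cong refl, auto)
  finally show ?thesis .
qed

lemma d_S_eq_weighted_inversions:
  assumes fin: "finite S" and p: "0 < p" and inj: "inj_on \<tau> S"
  shows "d_S p S \<tau> = (1 - p) / (1 - p ^ card S) * (- ln p) * weighted_inversions p S \<tau>"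
proof -
  define c where "c = (1 - p) / (1 - p ^ card S)"
  define w where "w = rank_weight p S"
  define a where "a i = card {j\<in>S. j < i}" for i
  define b where "b i = card {j\<in>S. \<tau> j < \<tau> i}" for i
  have log_ratio: "f_OA p id i S * ln (f_OA p id i S / f_OA p \<tau> i S)
      = c * (- ln p) * (w i * (real (b i) - real (a i)))" for i
  proof -
    have f: "f_OA p id i S = c * p ^ a i" "f_OA p \<tau> i S = c * p ^ b i"
      by (simp_all add: f_OA_def rel_pos_def c_def a_def b_def)
    show ?thesis
    proof (cases "c = 0")
      case False
      moreover have "ln (p ^ a i / p ^ b i) = (real (a i) - real (b i)) * ln p"
        using p by (simp add: ln_div ln_realpow left_diff_distrib)
      ultimately have "f_OA p id i S * ln (f_OA p id i S / f_OA p \<tau> i S)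
          = c * p ^ a i * ((real (a i) - real (b i)) * ln p)"
        using f by simp
      moreover have "w i = p ^ a i" by (simp add: w_def rank_weight_def a_def)
      ultimately show ?thesis by (simp add: algebra_simps)
    qed (simp add: f)
  qed
  have "d_S p S \<tau> = c * (- ln p) * (\<Sum>i\<in>S. w i * (real (b i) - real (a i)))"
    unfolding d_S_def log_ratio by (simp add: sum_distrib_left)
  also have "(\<Sum>i\<in>S. w i * (real (b i) - real (a i)))
     = (\<Sum>i\<in>S. \<Sum>j\<in>S. w i * ((if \<tau> j < \<tau> i then 1 else 0) - (if j < i then 1 else 0)))"
    unfolding a_def b_def of_nat_card_filter_eq_sum[OF fin]
    by (simp add: sum_distrib_left sum_subtractf right_diff_distrib)
  also have "\<dots> = (\<Sum>i\<in>S. \<Sum>j\<in>S. if i < j then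
       w i * ((if \<tau> j < \<tau> i then 1 else 0) - (if j < i then 1 else 0))
     + w j * ((if \<tau> i < \<tau> j then 1 else 0) - (if i < j then 1 else 0)) else 0)"
    by (rule sum_square_eq_sum_lt_pairs) simp
  also have "\<dots> = weighted_inversions p S \<tau>"
    unfolding weighted_inversions_def w_def[symmetric]
  proof (intro sum.cong refl)
    fix i j assume "i \<in> S" "j \<in> S"
    then have "i < j \<Longrightarrow> \<tau> i \<noteq> \<tau> j" using inj by (metis inj_on_eq_iff less_irrefl)
    then show "(if i < j then
       w i * ((if \<tau> j < \<tau> i then 1 else 0) - (if j < i then 1 else 0))
     + w j * ((if \<tau> i < \<tau> j then 1 else 0) - (if i < j then 1 else 0)) else 0)
      = (if i < j \<and> \<tau> j < \<tau> i then w i - w j else 0)"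
      by (cases "i < j"; cases "\<tau> j < \<tau> i") auto
  qed
  finally show ?thesis unfolding c_def .
qed

lemma rank_weight_antimono:
  assumes "finite S" "0 < p" "p \<le> 1" "i \<le> j"
  shows "rank_weight p S j \<le> rank_weight p S i"
proof -
  have "card {k\<in>S. k < i} \<le> card {k\<in>S. k < j}"
    using assms by (intro card_mono) auto
  then show ?thesis unfolding rank_weight_def using assms by (intro power_decreasing) auto
qed

lemma weighted_inversions_mono:
  assumes "finite S" "0 < p" "p \<le> 1"
    and "\<And>i j. i \<in> S \<Longrightarrow> j \<in> S \<Longrightarrow> i < j \<Longrightarrow> \<tau> j < \<tau> i \<Longrightarrow> \<sigma> j < \<sigma> i"
  shows "weighted_inversions p S \<tau> \<le> weighted_inversions p S \<sigma>"
  unfolding weighted_inversions_def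
  using assms rank_weight_antimono[OF assms(1-3)] by (intro sum_mono) auto

lemma d_S_mono_inversions:
  assumes "finite S" "0 < p" "p \<le> 1" "inj_on \<tau> S" "inj_on \<sigma> S"
    and "\<And>i j. i \<in> S \<Longrightarrow> j \<in> S \<Longrightarrow> i < j \<Longrightarrow> \<tau> j < \<tau> i \<Longrightarrow> \<sigma> j < \<sigma> i"
  shows "d_S p S \<tau> \<le> d_S p S \<sigma>"
proof -
  have "0 \<le> (1 - p) / (1 - p ^ card S) * (- ln p)"
    using assms(2,3) power_le_one[of p "card S"]
    by (intro mult_nonneg_nonneg divide_nonneg_nonneg) auto
  then show ?thesis
    using assms weighted_inversions_mono[of S p \<tau> \<sigma>]
    by (simp only: d_S_eq_weighted_inversions mult_left_mono)
qed

lemma adj_swap_inversion: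
  assumes "i < j" "adj_swap m j < adj_swap m i"
  shows "i = m \<and> j = m + 1"
  using assms by (auto simp: adj_swap_def split: if_splits)

lemma inj_adj_swap: "inj (adj_swap m)"
  by (auto simp: inj_def adj_swap_def split: if_splits)

lemma ascending_gap:
  fixes \<sigma> :: "nat \<Rightarrow> nat" and i j :: nat
  assumes "\<And>n. i \<le> n \<Longrightarrow> n < j \<Longrightarrow> \<sigma> n < \<sigma> (Suc n)" and "i \<le> j"
  shows "\<sigma> i + (j - i) \<le> \<sigma> j"
  using assms(2,1)
proof (induction j rule: dec_induct)
  case (step n)
  then have "\<sigma> i + (n - i) < \<sigma> (Suc n)" by (meson le_less_trans less_Suc_eq)
  then show ?case using step.hyps(1) by (simp add: Suc_diff_le)
qed simp

lemma ranking_has_descent: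
  fixes \<sigma> :: "nat \<Rightarrow> nat" and K :: nat
  assumes bij: "bij_betw \<sigma> {1..K} {1..K}" and moved: "\<exists>i\<in>{1..K}. \<sigma> i \<noteq> i"
  shows "\<exists>m\<in>{1..K-1}. \<sigma> (m + 1) < \<sigma> m"
proof (rule ccontr)
  assume "\<not> ?thesis"
  then have "\<sigma> n \<le> \<sigma> (Suc n)" if "1 \<le> n" "n < K" for n
    using that by force
  moreover have "\<sigma> n \<noteq> \<sigma> (Suc n)" if "1 \<le> n" "n < K" for n
    using that bij_betw_imp_inj_on[OF bij] by (metis atLeastAtMost_iff inj_on_eq_iff
        less_eq_Suc_le n_not_Suc_n order.strict_implies_order le_SucI)
  ultimately have ascending: "\<sigma> n < \<sigma> (Suc n)" if "1 \<le> n" "n < K" for n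
    using that by (simp add: order_less_le)
  obtain i where i: "i \<in> {1..K}" "\<sigma> i \<noteq> i" using moved by blast
  have "1 \<le> \<sigma> 1" "\<sigma> K \<le> K" using i bij_betwE[OF bij] by force+
  moreover have "\<sigma> 1 + (i - 1) \<le> \<sigma> i" "\<sigma> i + (K - i) \<le> \<sigma> K"
    using i ascending ascending_gap[of 1 i \<sigma>] ascending_gap[of i K \<sigma>] by auto
  ultimately show False using i by auto
qed

theorem mainTheorem10:
  fixes K :: nat and p :: real and \<sigma> :: "nat \<Rightarrow> nat"
  assumes "K \<ge> 2" and "0 < p" and "p < 1"
    and "is_ranking K \<sigma>"
    and "\<exists>i\<in>{1..K}. \<sigma> i \<noteq> i"
  shows "\<exists>m\<in>{1..K-1}. \<forall>S\<in>admissible_sets K. d_S p S \<sigma> \<ge> d_S p S (adj_swap m)"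
proof -
  have bij: "bij_betw \<sigma> {1..K} {1..K}" using assms(4) is_ranking_def by blast
  obtain m where m: "m \<in> {1..K-1}" and descent: "\<sigma> (m + 1) < \<sigma> m"
    using ranking_has_descent[OF bij assms(5)] by blast
  have "d_S p S (adj_swap m) \<le> d_S p S \<sigma>" if "S \<in> admissible_sets K" for S
  proof -
    have S: "S \<subseteq> {1..K}" using that by (simp add: admissible_sets_def)
    show ?thesis
    proof (rule d_S_mono_inversions)
      show "finite S" using S finite_subset by blast
      show "inj_on (adj_swap m) S" using inj_adj_swap by (rule inj_on_subset) simp
      show "inj_on \<sigma> S" using bij_betw_imp_inj_on[OF bij] S by (rule inj_on_subset)
    qed (use assms(2,3) descent adj_swap_inversion in auto)
  qed
  then show ?thesis using m by blast
qed

end
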